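(* Let $n>1$ be an integer. Then $$\sum_{k=0}^{n-1}(3k+1)(-16)^{n-k-1}\binom{2k}{k} f_k \equiv 0 \pmod{n\binom{2n}{n}},$$ i.e. the integer on the left is divisible by $n\binom{2n}{n}$.
   Context: The Franel numbers are defined by $f_n=\sum_{k=0}^n \binom{n}{k}^3$ for integers $n\ge 0$. *)

theory Defs
  imports Main
begin

definition franel :: "nat \<Rightarrow> nat" where
  "franel n = (\<Sum>k=0..n. (n choose k) ^ 3)"

end

theory Submission
  imports Defs Complex_Main
begin

(* Plan of the proof.
   1. Franel's recurrence (n+2)^2 f_(n+2) = (7n^2+21n+16) f_(n+1) + 8(n+1)^2 f_n,
      proved by Zeilberger's method: an explicit certificate makes the recurrence
      hold for every summand up to a telescoping difference.
   2. By the same method h_n = sum_j C(n+2j,3j) C(2j,j) C(3j,j) (-4)^(n-j) satisfies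
      the same recurrence; since h_0 = f_0 and h_1 = f_1, we get f_n = h_n.
   3. For Q_n = sum_j C(2j,j) C(3j+1,j) C(n+2j,3j+1) (-4)^(n-1-j) one checks termwise
      (2n+1) Q_(n+1) + 8n Q_n = (3n+1) h_n.
   4. Together with S_(n+1) = -16 S_n + (3n+1) C(2n,n) f_n and
      (n+1) C(2n+2,n+1) = 2(2n+1) C(2n,n), induction gives 2 S_n = n C(2n,n) Q_n.
   5. Q_n is even for n >= 2 since C(2j,j) is even for j >= 1, which concludes. *)

lemma sum_telescope_zero:
  fixes a G :: "nat \<Rightarrow> 'a::ab_group_add"
  assumes "\<And>k. k \<le> N \<Longrightarrow> a k = G (Suc k) - G k" and "G 0 = 0" and "G (Suc N) = 0"
  shows "(\<Sum>k=0..N. a k) = 0"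
proof -
  have "(\<Sum>k=0..N. a k) = (\<Sum>k=0..N. G (Suc k) - G k)"
    using assms(1) by (intro sum.cong) auto
  also have "\<dots> = G (Suc N) - G 0" by (rule sum_Suc_diff) simp
  finally show ?thesis using assms(2,3) by simp
qed

lemma second_order_recurrence_unique:
  fixes u v :: "nat \<Rightarrow> 'a::idom"
  assumes "\<And>n. c n \<noteq> 0"
    and "\<And>n. c n * u (n+2) = a n * u (n+1) + b n * u n"
    and "\<And>n. c n * v (n+2) = a n * v (n+1) + b n * v n"
    and "u 0 = v 0" and "u 1 = v 1"
  shows "u n = v n"
proof -
  have "u n = v n \<and> u (Suc n) = v (Suc n)"
  proof (induction n)
    case 0
    then show ?case using assms(4,5) by simp
  next
    case (Suc n)
    have "c n * u (n+2) = c n * v (n+2)" using assms(2,3)[of n] Suc by simp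
    then have "u (n+2) = v (n+2)" using assms(1) by simp
    then show ?case using Suc by simp
  qed
  then show ?thesis by simp
qed

lemma choose_Suc_upper_ratio:
  assumes "k \<le> Suc N"
  shows "(of_nat (Suc N choose k) :: 'a::comm_ring_1) * (of_nat N + 1 - of_nat k)
       = (of_nat N + 1) * of_nat (N choose k)"
proof -
  have "(Suc N - k) * (Suc N choose k) = Suc N * (N choose k)"
    using binomial_absorb_comp[of "Suc N" k] by simp
  then have "(of_nat (Suc N - k) * of_nat (Suc N choose k) :: 'a) = of_nat (Suc N) * of_nat (N choose k)"
    by (simp only: of_nat_mult [symmetric])
  then show ?thesis using assms by (simp add: of_nat_diff algebra_simps)
qed

lemma choose_Suc_lower_ratio:
  assumes "i \<le> N"
  shows "(of_nat (N choose Suc i) :: 'a::comm_ring_1) * (of_nat i + 1)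
       = of_nat (N choose i) * (of_nat N - of_nat i)"
proof -
  have "Suc i * (N choose Suc i) = (N - i) * (N choose i)"
    using binomial_absorption[of i N] binomial_absorb_comp[of N i] by simp
  then have "(of_nat (Suc i) * of_nat (N choose Suc i) :: 'a) = of_nat (N - i) * of_nat (N choose i)"
    by (simp only: of_nat_mult [symmetric])
  then show ?thesis using assms by (simp add: of_nat_diff algebra_simps)
qed

(* Franel's sum may be extended by zero terms; needed to compare f_n, f_(n+1), f_(n+2)
   as sums over one common range. *)
lemma franel_as_longer_sum:
  assumes "n \<le> N"
  shows "real (franel n) = (\<Sum>k=0..N. real (n choose k) ^ 3)"
proof -
  have "real (franel n) = (\<Sum>k=0..n. real (n choose k) ^ 3)"
    by (simp add: franel_def)
  also have "\<dots> = (\<Sum>k=0..N. real (n choose k) ^ 3)"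
    using assms by (intro sum.mono_neutral_left) (auto simp: binomial_eq_0)
  finally show ?thesis .
qed

(* Zeilberger's certificate for Franel's recurrence:  with a_k = C(n,k)^3,
   b_k = C(n+1,k)^3, c_k = C(n+2,k)^3 one has
     -8(n+1)^2 a_k - (7n^2+21n+16) b_k + (n+2)^2 c_k = G(k+1) - G(k),
   where G(k) = C(n+1,k-1)^3 P(n,k) / (n+1) with the polynomial P below, and G(0) = 0. *)
definition franel_cert_poly :: "real \<Rightarrow> real \<Rightarrow> real" where
  "franel_cert_poly n k = 4*k^3 - 30*k^2 + 78*k - 72 + n*(93*k - 18*k^2 - 128)
                          + n^2*(27*k - 74) - 14*n^3"

definition franel_cert :: "nat \<Rightarrow> nat \<Rightarrow> real" where
  "franel_cert n k = (if k = 0 then 0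
     else real (Suc n choose (k - 1)) ^ 3 * franel_cert_poly (real n) (real k) / (real n + 1))"

lemma franel_cert_identity:
  fixes n k :: real
  shows "-8*(n+1-k)^3*(n+2-k)^3 - (7*n^2+21*n+16)*(n+1)*(n+2-k)^3 + (n+1)*(n+2)^5
       = (n+2-k)^3 * franel_cert_poly n (k+1) - k^3 * franel_cert_poly n k"
  unfolding franel_cert_poly_def by algebra

(* The certificate identity for abstract values c, x, y, z standing for C(n,k),
   C(n+1,k), C(n+2,k), C(n+1,k-1), related only by the ratios of consecutive terms. *)
lemma franel_cert_algebra:
  fixes n k c x y z :: real
  assumes "n + 1 \<noteq> 0" and "n + 2 - k \<noteq> 0"
    and "x * (n + 1 - k) = (n + 1) * c"
    and "y * (n + 2 - k) = (n + 2) * x"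
    and "x * k = z * (n + 2 - k)"
  shows "-8*(n+1)^2*c^3 - (7*n^2+21*n+16)*x^3 + (n+2)^2*y^3
       = x^3 * franel_cert_poly n (k+1) / (n+1) - z^3 * franel_cert_poly n k / (n+1)"
proof -
  define w u v where "w = n + 1" and "u = n + 1 - k" and "v = n + 2 - k"
  have nz: "w \<noteq> 0" "v \<noteq> 0" using assms(1,2) by (simp_all add: w_def v_def)
  have c: "w^2 * c^3 = x^3 * u^3 / w"
  proof -
    have c_eq: "c = x * u / w" using assms(3) nz by (simp add: w_def u_def field_simps)
    show ?thesis unfolding c_eq using nz by (simp add: field_simps power3_eq_cube power2_eq_square)
  qed
  have y: "(n+2)^2 * y^3 = (n+2)^5 * x^3 / v^3"
  proof -
    have "y = (n + 2) * x / v" using assms(4) nz by (simp add: v_def field_simps)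
    then show ?thesis by (simp add: power_divide power_mult_distrib mult.assoc flip: power_add)
  qed
  have z: "z^3 = x^3 * k^3 / v^3"
  proof -
    have "z = x * k / v" using assms(5) nz by (simp add: v_def field_simps)
    then show ?thesis by (simp add: power_divide power_mult_distrib)
  qed
  have identity: "-8*u^3*v^3 - (7*n^2+21*n+16)*w*v^3 + w*(n+2)^5
      = v^3 * franel_cert_poly n (k+1) - k^3 * franel_cert_poly n k"
    using franel_cert_identity[of n k] by (simp add: w_def u_def v_def)
  have "-8*w^2*c^3 - (7*n^2+21*n+16)*x^3 + (n+2)^2*y^3
      = x^3 * (-8*u^3*v^3 - (7*n^2+21*n+16)*w*v^3 + w*(n+2)^5) / (w*v^3)"
    using c y nz by (simp add: field_simps)
  also have "\<dots> = x^3 * franel_cert_poly n (k+1) / w - z^3 * franel_cert_poly n k / w"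
    unfolding identity z using nz by (simp add: field_simps)
  finally show ?thesis by (simp add: w_def)
qed


(* The certificate identity for the actual summands, for 0 <= k <= n+2; the case
   k = n+2 is the boundary where C(n+2,k) is the only nonzero term. *)
lemma franel_summand_telescopes:
  assumes "k \<le> n + 2"
  shows "-8*(real n+1)^2 * real (n choose k)^3 - (7*real n^2+21*real n+16) * real (Suc n choose k)^3
          + (real n+2)^2 * real (Suc (Suc n) choose k)^3
       = franel_cert n (Suc k) - franel_cert n k"
proof (cases "k = n + 2")
  case True
  have "(real n + 2)^2 * (real n + 1) = - franel_cert_poly (real n) (real n + 2)"
    unfolding franel_cert_poly_def by algebra
  then have "(real n + 2)^2 = - franel_cert_poly (real n) (real n + 2) / (real n + 1)"
    by (simp add: field_simps)
  then show ?thesis using True by (simp add: franel_cert_def binomial_eq_0 add.commute)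
next
  case False
  then have k: "k \<le> Suc n" using assms by simp
  define z where "z = (if k = 0 then 0 else real (Suc n choose (k - 1)))"
  have cert_k: "franel_cert n k = z^3 * franel_cert_poly (real n) (real k) / (real n + 1)"
    by (simp add: franel_cert_def z_def)
  have rel_c: "real (Suc n choose k) * (real n + 1 - real k) = (real n + 1) * real (n choose k)"
    using choose_Suc_upper_ratio[OF k, where 'a = real] by simp
  have rel_y: "real (Suc (Suc n) choose k) * (real n + 2 - real k) = (real n + 2) * real (Suc n choose k)"
    using choose_Suc_upper_ratio[of k "Suc n", where 'a = real] k by (simp add: add.commute)
  have rel_z: "real (Suc n choose k) * real k = z * (real n + 2 - real k)"
  proof (cases k)
    case (Suc i)
    then show ?thesis
      using choose_Suc_lower_ratio[of i "Suc n", where 'a = real] k by (simp add: z_def algebra_simps)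
  qed (simp add: z_def)
  have "-8*(real n+1)^2 * real (n choose k)^3 - (7*real n^2+21*real n+16) * real (Suc n choose k)^3
          + (real n+2)^2 * real (Suc (Suc n) choose k)^3
      = real (Suc n choose k)^3 * franel_cert_poly (real n) (real k + 1) / (real n + 1)
          - z^3 * franel_cert_poly (real n) (real k) / (real n + 1)"
    by (rule franel_cert_algebra) (use k rel_c rel_y rel_z in \<open>auto simp: algebra_simps\<close>)
  then show ?thesis unfolding cert_k by (simp add: franel_cert_def add.commute)
qed

theorem franel_recurrence:
  "(real n + 2)^2 * real (franel (n + 2))
     = (7*real n^2 + 21*real n + 16) * real (franel (n + 1)) + 8*(real n + 1)^2 * real (franel n)"
proof -
  have "(\<Sum>k=0..n+2. -8*(real n+1)^2 * real (n choose k)^3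
          - (7*real n^2+21*real n+16) * real (Suc n choose k)^3
          + (real n+2)^2 * real (Suc (Suc n) choose k)^3) = 0"
  proof (rule sum_telescope_zero[where G = "franel_cert n"])
    show "franel_cert n 0 = 0" by (simp add: franel_cert_def)
    show "franel_cert n (Suc (n + 2)) = 0" by (simp add: franel_cert_def binomial_eq_0)
  qed (rule franel_summand_telescopes)
  then have "-8*(real n+1)^2 * (\<Sum>k=0..n+2. real (n choose k)^3)
      - (7*real n^2+21*real n+16) * (\<Sum>k=0..n+2. real (Suc n choose k)^3)
      + (real n+2)^2 * (\<Sum>k=0..n+2. real (Suc (Suc n) choose k)^3) = 0"
    by (simp only: sum.distrib sum_subtractf flip: sum_distrib_left)
  then show ?thesis
    using franel_as_longer_sum[of n "n+2"] franel_as_longer_sum[of "Suc n" "n+2"]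
      franel_as_longer_sum[of "Suc (Suc n)" "n+2"]
    by (simp add: algebra_simps)
qed


definition multinom :: "nat \<Rightarrow> nat \<Rightarrow> nat" where
  "multinom n j = ((n + 2*j) choose (3*j)) * ((2*j) choose j) * ((3*j) choose j)"

lemma multinom_fact:
  assumes "j \<le> n"
  shows "real (multinom n j) = fact (n + 2*j) / (fact (n - j) * fact j ^ 3)"
proof -
  have a: "real ((n+2*j) choose (3*j)) = fact (n+2*j) / (fact (3*j) * fact (n-j))"
    using binomial_fact[of "3*j" "n+2*j"] assms by (simp add: numeral_3_eq_3)
  have b: "real ((2*j) choose j) = fact (2*j) / (fact j * fact j)"
    using binomial_fact[of j "2*j"] by (simp add: mult_2)
  have c: "real ((3*j) choose j) = fact (3*j) / (fact j * fact (2*j))"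
    using binomial_fact[of j "3*j"] by (simp add: numeral_3_eq_3 mult_2)
  show ?thesis unfolding multinom_def of_nat_mult a b c by (simp add: field_simps power3_eq_cube)
qed

lemma multinom_eq_0: "n < j \<Longrightarrow> multinom n j = 0"
  unfolding multinom_def by (simp add: binomial_eq_0)

lemma multinom_step_upper:
  assumes "j \<le> Suc N"
  shows "real (multinom (Suc N) j) * (real N + 1 - real j) = (real N + 1 + 2*real j) * real (multinom N j)"
proof (cases "j = Suc N")
  case False
  with assms have j: "j \<le> N" by simp
  define A B C where "A = (fact (N + 2*j) :: real)" and "B = (fact (N - j) :: real)"
    and "C = (fact j :: real)"
  define D where "D = real N + 1 - real j"
  have nz: "B \<noteq> 0" "C \<noteq> 0" "D \<noteq> 0" using j by (auto simp: B_def C_def D_def)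
  have "Suc N + 2*j = Suc (N + 2*j)" and "Suc N - j = Suc (N - j)" using j by simp_all
  then have upper: "real (multinom (Suc N) j) = (real N + 1 + 2*real j) * A / (D * B * C^3)"
    and lower: "real (multinom N j) = A / (B * C^3)"
    using multinom_fact[of j "Suc N"] multinom_fact[of j N] j
    by (simp_all add: A_def B_def C_def D_def of_nat_diff algebra_simps)
  show ?thesis unfolding upper lower D_def[symmetric] using nz by (simp add: field_simps)
qed (simp add: multinom_eq_0)

lemma multinom_step_lower:
  assumes "Suc i \<le> N"
  shows "real (multinom N (Suc i)) * (real i + 1)^3
       = real (multinom N i) * ((real N + 2*real i + 2) * (real N + 2*real i + 1) * (real N - real i))"
proof -
  define A B C where "A = (fact (N + 2*i) :: real)" and "B = (fact (N - Suc i) :: real)"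
    and "C = (fact i :: real)"
  define D E where "D = real N - real i" and "E = real i + 1"
  have nz: "B \<noteq> 0" "C \<noteq> 0" "D \<noteq> 0" "E \<noteq> 0"
    using assms by (auto simp: B_def C_def D_def E_def)
  have "N + 2 * Suc i = Suc (Suc (N + 2*i))" and "N - i = Suc (N - Suc i)" using assms by simp_all
  then have upper: "real (multinom N (Suc i))
      = (real N + 2*real i + 2) * (real N + 2*real i + 1) * A / (B * (E * C)^3)"
    and lower: "real (multinom N i) = A / (D * B * C^3)"
    using multinom_fact[of "Suc i" N] multinom_fact[of i N] assms
    by (simp_all add: A_def B_def C_def D_def E_def of_nat_diff algebra_simps)
  show ?thesis unfolding upper lower D_def[symmetric] E_def[symmetric] using nz
    by (simp add: field_simps power_mult_distrib)
qed


definition franel_alt :: "nat \<Rightarrow> int" where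
  "franel_alt n = (\<Sum>j=0..n. int (multinom n j) * (-4) ^ (n - j))"

(* Pulling out (-4)^n leaves the weights M(n,j) (-1/4)^j, whose sums satisfy a
   recurrence with a certificate of the same shape as Franel's. *)
definition alt_weight :: "nat \<Rightarrow> nat \<Rightarrow> real" where
  "alt_weight n j = real (multinom n j) * (-1/4) ^ j"

lemma franel_alt_weights: "real_of_int (franel_alt n) = (-4) ^ n * (\<Sum>j=0..n. alt_weight n j)"
  unfolding franel_alt_def alt_weight_def sum_distrib_left of_int_sum
proof (rule sum.cong)
  fix j assume "j \<in> {0..n}"
  then have "((-4)::real) ^ n = (-4) ^ (n - j) * (-4) ^ j" by (simp flip: power_add)
  moreover have "((-4)::real) ^ j * (-1/4) ^ j = 1" by (simp flip: power_mult_distrib)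
  ultimately show "real_of_int (int (multinom n j) * (-4) ^ (n - j))
      = (-4) ^ n * (real (multinom n j) * (-1/4) ^ j)"
    by (simp add: algebra_simps)
qed simp

lemma alt_weight_sum_longer:
  "n \<le> N \<Longrightarrow> (\<Sum>j=0..N. alt_weight n j) = (\<Sum>j=0..n. alt_weight n j)"
  by (rule sum.mono_neutral_right) (auto simp: alt_weight_def multinom_eq_0)

(* Certificate: with r_n = sum_j w(n,j),
     -8(n+1)^2 w(n,k) + 4(7n^2+21n+16) w(n+1,k) + 16(n+2)^2 w(n+2,k) = H(k+1) - H(k),
   where H(k) = w(n+1,k-1) R(n,k) with the polynomial R below, and H(0) = 0. *)
definition alt_cert_poly :: "real \<Rightarrow> real \<Rightarrow> real" where
  "alt_cert_poly n k = 12*(10*k + 5*n + 6*n*k + 3*n^2)"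

definition alt_cert :: "nat \<Rightarrow> nat \<Rightarrow> real" where
  "alt_cert n k = (if k = 0 then 0 else alt_weight (n + 1) (k - 1) * alt_cert_poly (real n) (real k))"

lemma alt_cert_identity:
  fixes n k :: real
  shows "(-1/4)*(-8*(n+1)^2*(n+1-k)*(n+2*k)*(n+2-k) + 4*(7*n^2+21*n+16)*((n+1+2*k)*(n+2*k)*(n+2-k))
          + 16*(n+2)^2*(n+2+2*k)*(n+1+2*k)*(n+2*k))
       = (-1/4)*((n+1+2*k)*(n+2*k)*(n+2-k)) * alt_cert_poly n (k+1) - k^3 * alt_cert_poly n k"
  unfolding alt_cert_poly_def by algebra

(* The certificate identity for abstract weights related by the ratios of M,
   with q, q' standing for (-1/4)^k and (-1/4)^(k-1). *)
lemma alt_cert_algebra: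
  fixes n k c x y z q q' :: real
  assumes "1 \<le> k" and "k \<le> n + 1"
    and "x * (n + 1 - k) = (n + 1 + 2*k) * c"
    and "y * (n + 2 - k) = (n + 2 + 2*k) * x"
    and "x * k^3 = z * ((n + 1 + 2*k) * (n + 2*k) * (n + 2 - k))"
    and "q = (-1/4) * q'"
  shows "-8*(n+1)^2*(c*q) + 4*(7*n^2+21*n+16)*(x*q) + 16*(n+2)^2*(y*q)
       = x * q * alt_cert_poly n (k+1) - z * q' * alt_cert_poly n k"
proof -
  define D where "D = (n+1+2*k) * (n+2*k) * (n+2-k)"
  have "D \<noteq> 0" using assms(1,2) by (simp add: D_def)
  have c: "c * D = x * ((n+1-k) * (n+2*k) * (n+2-k))" using assms(3) unfolding D_def by algebra
  have y: "y * D = x * ((n+2+2*k) * (n+1+2*k) * (n+2*k))" using assms(4) unfolding D_def by algebra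
  have z: "z * D = x * k^3" using assms(5) by (simp add: D_def)
  have identity: "(-1/4)*(-8*(n+1)^2*((n+1-k)*(n+2*k)*(n+2-k)) + 4*(7*n^2+21*n+16)*D
       + 16*(n+2)^2*((n+2+2*k)*(n+1+2*k)*(n+2*k)))
     = (-1/4)*D*alt_cert_poly n (k+1) - k^3*alt_cert_poly n k"
    using alt_cert_identity[of n k] by (simp add: D_def algebra_simps)
  have "(-8*(n+1)^2*(c*q) + 4*(7*n^2+21*n+16)*(x*q) + 16*(n+2)^2*(y*q)) * D
     = q' * x * ((-1/4)*(-8*(n+1)^2*((n+1-k)*(n+2*k)*(n+2-k)) + 4*(7*n^2+21*n+16)*D
         + 16*(n+2)^2*((n+2+2*k)*(n+1+2*k)*(n+2*k))))"
    using c y assms(6) by algebra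
  also have "\<dots> = q' * x * ((-1/4)*D*alt_cert_poly n (k+1) - k^3*alt_cert_poly n k)"
    by (simp only: identity)
  also have "\<dots> = (x * q * alt_cert_poly n (k+1) - z * q' * alt_cert_poly n k) * D"
    using z assms(6) by algebra
  finally show ?thesis using \<open>D \<noteq> 0\<close> by simp
qed

lemma alt_summand_telescopes:
  assumes "k \<le> n + 2"
  shows "-8*(real n+1)^2 * alt_weight n k + 4*(7*real n^2+21*real n+16) * alt_weight (n+1) k
          + 16*(real n+2)^2 * alt_weight (n+2) k
       = alt_cert n (Suc k) - alt_cert n k"
proof -
  consider "k = 0" | "1 \<le> k \<and> k \<le> n + 1" | "k = n + 2" using assms by linarith
  then show ?thesis
  proof cases
    case 1
    have w: "alt_weight m 0 = 1" for m by (simp add: alt_weight_def multinom_def)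
    have "-8*(real n+1)^2 + 4*(7*real n^2+21*real n+16) + 16*(real n+2)^2 = alt_cert_poly n 1"
      unfolding alt_cert_poly_def by algebra
    then show ?thesis using 1 by (simp add: w alt_cert_def)
  next
    case 2
    then obtain i where i: "k = Suc i" and k: "k \<le> Suc n" by (cases k) auto
    have rel_c: "real (multinom (Suc n) k) * (real n + 1 - real k)
        = (real n + 1 + 2*real k) * real (multinom n k)"
      using multinom_step_upper[OF k] .
    have rel_y: "real (multinom (Suc (Suc n)) k) * (real n + 2 - real k)
        = (real n + 2 + 2*real k) * real (multinom (Suc n) k)"
      using multinom_step_upper[of k "Suc n"] k by (simp add: algebra_simps)
    have rel_z: "real (multinom (Suc n) k) * real k ^ 3
        = real (multinom (Suc n) i) * ((real n + 1 + 2*real k) * (real n + 2*real k) * (real n + 2 - real k))"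
      using multinom_step_lower[of i "Suc n"] i k by (simp add: algebra_simps)
    have "-8*(real n+1)^2 * (real (multinom n k) * (-1/4)^k)
          + 4*(7*real n^2+21*real n+16) * (real (multinom (n+1) k) * (-1/4)^k)
          + 16*(real n+2)^2 * (real (multinom (n+2) k) * (-1/4)^k)
       = real (multinom (n+1) k) * (-1/4)^k * alt_cert_poly n (real k + 1)
          - real (multinom (n+1) i) * (-1/4)^i * alt_cert_poly n k"
      by (rule alt_cert_algebra) (use 2 rel_c rel_y rel_z i in auto)
    then show ?thesis using i by (simp add: alt_weight_def alt_cert_def algebra_simps)
  next
    case 3
    define M2 M1 where "M2 = real (multinom (n+2) (n+2))" and "M1 = real (multinom (n+1) (n+1))"
    define q where "q = ((-1/4)::real) ^ (n+1)"
    have "M2 * (real n + 2)^3 = real (multinom (n+2) (n+1)) * ((3*real n + 6) * (3*real n + 5))"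
      using multinom_step_lower[of "n+1" "n+2"] by (simp add: M2_def algebra_simps)
    moreover have "real (multinom (n+2) (n+1)) = (3*real n + 4) * M1"
      using multinom_step_upper[of "n+1" "n+1"] by (simp add: M1_def algebra_simps)
    ultimately have "(16*(real n+2)^2 * (M2 * (-1/4) * q) + M1 * q * alt_cert_poly n (real n + 2))
        * (real n + 2) = 0"
      unfolding alt_cert_poly_def by algebra
    then have "16*(real n+2)^2 * (M2 * (-1/4) * q) + M1 * q * alt_cert_poly n (real n + 2) = 0"
      by simp
    then have "16*(real n+2)^2 * (M2 * (-1/4) * q) = - (M1 * q * alt_cert_poly n (real n + 2))"
      by (simp only: eq_neg_iff_add_eq_0)
    then show ?thesis using 3
      by (simp add: alt_weight_def alt_cert_def multinom_eq_0 M1_def M2_def q_def add.commute)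
  qed
qed

lemma alt_weight_recurrence:
  fixes n :: nat
  defines "r \<equiv> \<lambda>m. \<Sum>j=0..m. alt_weight m j"
  shows "-8*(real n+1)^2 * r n + 4*(7*real n^2+21*real n+16) * r (n+1) + 16*(real n+2)^2 * r (n+2) = 0"
proof -
  have "(\<Sum>k=0..n+2. -8*(real n+1)^2 * alt_weight n k + 4*(7*real n^2+21*real n+16) * alt_weight (n+1) k
          + 16*(real n+2)^2 * alt_weight (n+2) k) = 0"
  proof (rule sum_telescope_zero[where G = "alt_cert n"])
    show "alt_cert n 0 = 0" by (simp add: alt_cert_def)
    show "alt_cert n (Suc (n + 2)) = 0" by (simp add: alt_cert_def alt_weight_def multinom_eq_0)
  qed (rule alt_summand_telescopes)
  then have "-8*(real n+1)^2 * (\<Sum>k=0..n+2. alt_weight n k)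
      + 4*(7*real n^2+21*real n+16) * (\<Sum>k=0..n+2. alt_weight (n+1) k)
      + 16*(real n+2)^2 * (\<Sum>k=0..n+2. alt_weight (n+2) k) = 0"
    by (simp only: sum.distrib flip: sum_distrib_left)
  moreover have "(\<Sum>k=0..n+2. alt_weight n k) = r n" and "(\<Sum>k=0..n+2. alt_weight (n+1) k) = r (n+1)"
    and "(\<Sum>k=0..n+2. alt_weight (n+2) k) = r (n+2)"
    unfolding r_def using alt_weight_sum_longer[of n "n+2"] alt_weight_sum_longer[of "n+1" "n+2"] by simp_all
  ultimately show ?thesis by simp
qed

(* Rescaling by (-4)^n turns it into Franel's recurrence for h_n. *)
lemma franel_alt_recurrence:
  "(real n + 2)^2 * real_of_int (franel_alt (n + 2))
     = (7*real n^2 + 21*real n + 16) * real_of_int (franel_alt (n + 1))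
       + 8*(real n + 1)^2 * real_of_int (franel_alt n)"
proof -
  define p where "p = ((-4)::real) ^ n"
  have "real_of_int (franel_alt (n + 2)) = 16 * p * (\<Sum>j=0..n+2. alt_weight (n+2) j)"
    and "real_of_int (franel_alt (n + 1)) = -4 * p * (\<Sum>j=0..n+1. alt_weight (n+1) j)"
    and "real_of_int (franel_alt n) = p * (\<Sum>j=0..n. alt_weight n j)"
    unfolding franel_alt_weights p_def by (simp_all add: power_add)
  then show ?thesis using alt_weight_recurrence[of n] by algebra
qed

theorem franel_alt_formula: "int (franel n) = franel_alt n"
proof -
  have "real (franel n) = real_of_int (franel_alt n)"
  proof (rule second_order_recurrence_unique[where c = "\<lambda>n. (real n + 2)^2"
        and a = "\<lambda>n. 7*real n^2 + 21*real n + 16" and b = "\<lambda>n. 8*(real n + 1)^2"])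
    show "(real n + 2)^2 \<noteq> 0" for n :: nat by simp
    show "real (franel 0) = real_of_int (franel_alt 0)"
      by (simp add: franel_def franel_alt_def multinom_def)
    show "real (franel 1) = real_of_int (franel_alt 1)"
      by (simp add: franel_def franel_alt_def multinom_def numeral_3_eq_3)
  qed (use franel_recurrence franel_alt_recurrence in auto)
  then show ?thesis by (metis of_int_eq_iff of_int_of_nat_eq)
qed


(* The quotient sequence Q_n = sum_j C(2j,j) C(3j+1,j) C(n+2j,3j+1) (-4)^(n-1-j);
   the claim will be that 2 S_n = n C(2n,n) Q_n. *)
definition Qterm :: "nat \<Rightarrow> nat \<Rightarrow> int" where
  "Qterm n j = int ((2*j) choose j) * int ((3*j + 1) choose j) * int ((n + 2*j) choose (3*j + 1))
               * (-4) ^ (n - 1 - j)"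

definition Q :: "nat \<Rightarrow> int" where
  "Q n = (\<Sum>j=0..n. Qterm n j)"

(* Termwise, (2n+1) Q_(n+1) + 8n Q_n = (3n+1) h_n; the term j = n of Q_n vanishes,
   which is why the case j = n is separate. *)
lemma Qterm_step:
  assumes "j \<le> n"
  shows "(2*int n + 1) * Qterm (Suc n) j + 8*int n * Qterm n j
       = (3*int n + 1) * int (multinom n j) * (-4) ^ (n - j)"
proof -
  define a B X Y C p where "a = int ((n + 2*j) choose (3*j + 1))" and "B = int ((n + 2*j) choose (3*j))"
    and "X = int ((3*j + 1) choose j)" and "Y = int ((3*j) choose j)" and "C = int ((2*j) choose j)"
    and "p = (-4::int) ^ (n - j)"
  have pascal: "int ((Suc n + 2*j) choose (3*j + 1)) = a + B"
  proof -
    have "(Suc n + 2*j) choose (3*j + 1) = Suc (n + 2*j) choose Suc (3*j)" by simp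
    then show ?thesis by (simp add: a_def B_def)
  qed
  have absorb_a: "(3*int j + 1) * a = (int n - int j) * B"
    using choose_Suc_lower_ratio[of "3*j" "n + 2*j", where 'a = int] assms
    by (simp add: a_def B_def algebra_simps)
  have absorb_X: "(2*int j + 1) * X = (3*int j + 1) * Y"
    using choose_Suc_upper_ratio[of j "3*j", where 'a = int]
    by (simp add: X_def Y_def algebra_simps)
  have term_n: "8*int n * Qterm n j = -2*int n * C * X * a * p"
  proof (cases "j < n")
    case True
    then have "(-4::int) ^ (n - j) = (-4) ^ (n - 1 - j) * (-4)"
      by (metis Suc_diff_Suc diff_Suc_eq_diff_pred power_Suc2)
    then show ?thesis by (simp add: Qterm_def a_def C_def X_def p_def algebra_simps)
  next
    case False
    with assms have "a = 0" "(n + 2*j) choose (3*j + 1) = 0" by (simp_all add: a_def binomial_eq_0)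
    then show ?thesis by (simp add: Qterm_def)
  qed
  have term_Sn: "Qterm (Suc n) j = C * X * (a + B) * p"
    unfolding Qterm_def pascal[symmetric] by (simp add: C_def X_def p_def)
  have multinom_n: "int (multinom n j) = B * C * Y"
    by (simp add: multinom_def B_def C_def Y_def)
  have "((2*int n + 1) * Qterm (Suc n) j + 8*int n * Qterm n j) * ((3*int j + 1) * (2*int j + 1))
      = ((3*int n + 1) * int (multinom n j) * p) * ((3*int j + 1) * (2*int j + 1))"
    unfolding term_n term_Sn multinom_n using absorb_a absorb_X by algebra
  moreover have "(3*int j + 1) * (2*int j + 1) \<noteq> 0" by simp
  ultimately show ?thesis by (simp add: p_def)
qed

lemma Q_step: "(2*int n + 1) * Q (Suc n) + 8*int n * Q n = (3*int n + 1) * franel_alt n"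
proof -
  have "Qterm (Suc n) (Suc n) = 0" by (simp add: Qterm_def binomial_eq_0)
  then have "Q (Suc n) = (\<Sum>j=0..n. Qterm (Suc n) j)" by (simp add: Q_def)
  then have "(2*int n + 1) * Q (Suc n) + 8*int n * Q n
      = (\<Sum>j=0..n. (2*int n + 1) * Qterm (Suc n) j + 8*int n * Qterm n j)"
    by (simp add: Q_def sum.distrib sum_distrib_left)
  also have "\<dots> = (\<Sum>j=0..n. (3*int n + 1) * (int (multinom n j) * (-4) ^ (n - j)))"
  proof (rule sum.cong)
    fix j assume "j \<in> {0..n}"
    then show "(2*int n + 1) * Qterm (Suc n) j + 8*int n * Qterm n j
        = (3*int n + 1) * (int (multinom n j) * (-4) ^ (n - j))"
      using Qterm_step[of j n] by (simp add: mult.assoc)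
  qed simp
  also have "\<dots> = (3*int n + 1) * franel_alt n"
    by (simp add: franel_alt_def sum_distrib_left)
  finally show ?thesis .
qed

lemma central_binomial_Suc: "Suc n * (2 * Suc n choose Suc n) = 2 * (2*n + 1) * (2*n choose n)"
proof -
  have "Suc n * (2 * Suc n choose Suc n) = Suc (Suc (2*n)) * (Suc (2*n) choose n)"
    using Suc_times_binomial_eq[of "Suc (2*n)" n] by simp
  also have "Suc (2*n) choose n = Suc (2*n) choose Suc n"
    using binomial_symmetric[of "Suc n" "Suc (2*n)"] by simp
  also have "Suc (Suc (2*n)) * \<dots> = 2 * (Suc n * (Suc (2*n) choose Suc n))" by simp
  also have "Suc n * (Suc (2*n) choose Suc n) = Suc (2*n) * (2*n choose n)"
    by (rule Suc_times_binomial)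
  finally show ?thesis by simp
qed

(* C(2j,j) = 2 C(2j-1,j-1) is even for j >= 1. *)
lemma central_binomial_even: "0 < j \<Longrightarrow> even (2*j choose j)"
proof -
  assume "0 < j"
  then obtain i where j: "j = Suc i" by (cases j) auto
  have "2*j choose j = (Suc (2*i) choose i) + (Suc (2*i) choose Suc i)" by (simp add: j)
  also have "Suc (2*i) choose Suc i = Suc (2*i) choose i"
    using binomial_symmetric[of "Suc i" "Suc (2*i)"] by simp
  finally show ?thesis by simp
qed

definition sun_sum :: "nat \<Rightarrow> int" where
  "sun_sum n = (\<Sum>k=0..n-1. (3 * int k + 1) * (-16) ^ (n - k - 1) * int (2 * k choose k) * int (franel k))"

lemma sun_sum_Suc:
  assumes "1 \<le> n"
  shows "sun_sum (Suc n) = -16 * sun_sum n + (3*int n + 1) * int (2*n choose n) * int (franel n)"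
proof -
  obtain m where m: "n = Suc m" using assms by (cases n) auto
  have "sun_sum (Suc n) = (\<Sum>k=0..m. (3 * int k + 1) * (-16) ^ (n - k) * int (2*k choose k) * int (franel k))
      + (3*int n + 1) * int (2*n choose n) * int (franel n)"
    by (simp add: sun_sum_def m)
  also have "(\<Sum>k=0..m. (3 * int k + 1) * (-16) ^ (n - k) * int (2*k choose k) * int (franel k))
      = -16 * sun_sum n"
    unfolding sun_sum_def sum_distrib_left m
  proof (rule sum.cong)
    fix k assume "k \<in> {0..Suc m - 1}"
    then have "Suc m - k = Suc (m - k)" by auto
    then show "(3 * int k + 1) * (-16) ^ (Suc m - k) * int (2*k choose k) * int (franel k)
        = -16 * ((3 * int k + 1) * (-16) ^ (Suc m - k - 1) * int (2*k choose k) * int (franel k))"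
      by simp
  qed simp
  finally show ?thesis .
qed

lemma sun_sum_closed_form:
  assumes "1 \<le> n"
  shows "2 * sun_sum n = int n * int (2*n choose n) * Q n"
  using assms
proof (induction n rule: nat_induct_at_least)
  case base
  show ?case by (simp add: sun_sum_def Q_def Qterm_def franel_def binomial_eq_0)
next
  case (Suc n)
  have "2 * sun_sum (Suc n) = -16 * (2 * sun_sum n) + 2 * int (2*n choose n) * ((3*int n + 1) * int (franel n))"
    using sun_sum_Suc[OF Suc.hyps] by (simp add: algebra_simps)
  also have "\<dots> = -16 * (int n * int (2*n choose n) * Q n)
      + 2 * int (2*n choose n) * ((2*int n + 1) * Q (Suc n) + 8*int n * Q n)"
    using Suc.IH Q_step[of n] by (simp add: franel_alt_formula)
  also have "\<dots> = int (2 * (2*n + 1) * (2*n choose n)) * Q (Suc n)"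
    by (simp add: algebra_simps)
  also have "\<dots> = int (Suc n) * int (2 * Suc n choose Suc n) * Q (Suc n)"
    by (simp only: central_binomial_Suc [symmetric] of_nat_mult)
  finally show ?case .
qed

(* Q_n is even for n >= 2: every term has the even factor C(2j,j), or (-4)^(n-1) when j = 0. *)
lemma Q_even:
  assumes "2 \<le> n"
  shows "even (Q n)"
  unfolding Q_def
proof (rule dvd_sum)
  fix j assume "j \<in> {0..n}"
  show "2 dvd Qterm n j"
  proof (cases "j = 0")
    case True
    obtain r where "n - 1 = Suc r" using assms by (cases "n - 1") auto
    then have "(2::int) dvd (-4) ^ (n - 1)" by simp
    then show ?thesis using True by (simp add: Qterm_def)
  next
    case False
    then have "(2::int) dvd int (2*j choose j)" using central_binomial_even by simp
    then show ?thesis by (simp add: Qterm_def)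
  qed
qed

theorem theorem1p1:
  fixes n :: nat
  assumes "n > 1"
  shows "int (n * (2 * n choose n)) dvd
    (\<Sum>k=0..n-1. (3 * int k + 1) * (-16) ^ (n - k - 1) * int (2 * k choose k) * int (franel k))"
proof -
  have closed: "2 * sun_sum n = int n * int (2*n choose n) * Q n"
    using assms by (intro sun_sum_closed_form) simp
  obtain q where "Q n = 2 * q" using Q_even[of n] assms by (auto elim: evenE)
  with closed have "sun_sum n = int (n * (2 * n choose n)) * q" by simp
  then show ?thesis by (simp add: sun_sum_def)
qed

end
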